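(* Let $\Sigma$ be a Riemann surface, $X$ a holomorphic function on $\Sigma$, and $p_1,\dots,p_N\in\Sigma$ points with $X(p_i)\neq0$ at which $dX$ has a simple zero; let $x=\log X$ locally and $D=X\frac{d}{dX}$. A function $g$ defined and meromorphic in a vicinity of $p_1,\dots,p_N$ belongs to $\hat\Xi$ if and only if for every $i=1,\dots,N$, writing $\nu$ for a local coordinate near $p_i$ with $\nu^2=x-x(p_i)$, the Laurent expansion of $g$ at $p_i$ in $\nu$ has odd principal part.
   Context: $\hat\Xi$ is the subspace of the space of functions defined in a vicinity of $p_1,\dots,p_N$ spanned (finite linear combinations) by $D^jf$, $j\ge0$, for all $f$ holomorphic (regular) at $p_1,\dots,p_N$. *)

theory Defs
  imports "HOL-Complex_Analysis.Complex_Analysis"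
begin

definition complex_chart :: "'a topology \<Rightarrow> ('a set \<times> ('a \<Rightarrow> complex)) \<Rightarrow> bool" where
  "complex_chart T c \<longleftrightarrow>
     (case c of (U, \<phi>) \<Rightarrow> openin T U \<and> open (\<phi> ` U) \<and>
        homeomorphic_map (subtopology T U) (top_of_set (\<phi> ` U)) \<phi>)"

definition holomorphic_atlas :: "'a topology \<Rightarrow> ('a set \<times> ('a \<Rightarrow> complex)) set \<Rightarrow> bool" where
  "holomorphic_atlas T A \<longleftrightarrow>
     (\<forall>c\<in>A. complex_chart T c) \<and>
     topspace T = (\<Union>c\<in>A. fst c) \<and>
     (\<forall>(U, \<phi>)\<in>A. \<forall>(V, \<rho>)\<in>A. (\<rho> \<circ> inv_into U \<phi>) holomorphic_on (\<phi> ` (U \<inter> V)))"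

definition riemann_surface :: "'a topology \<Rightarrow> ('a set \<times> ('a \<Rightarrow> complex)) set \<Rightarrow> bool" where
  "riemann_surface T A \<longleftrightarrow> Hausdorff_space T \<and> connected_space T \<and> holomorphic_atlas T A"

definition chart_at :: "('a set \<times> ('a \<Rightarrow> complex)) set \<Rightarrow> 'a \<Rightarrow> 'a set \<times> ('a \<Rightarrow> complex)" where
  "chart_at A q = (SOME c. c \<in> A \<and> q \<in> fst c)"

definition holo_at :: "('a set \<times> ('a \<Rightarrow> complex)) set \<Rightarrow> ('a \<Rightarrow> complex) \<Rightarrow> 'a \<Rightarrow> bool" where
  "holo_at A f q \<longleftrightarrow> (\<exists>(U, \<phi>)\<in>A. q \<in> U \<and> (f \<circ> inv_into U \<phi>) analytic_on {\<phi> q})"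

definition mero_at :: "('a set \<times> ('a \<Rightarrow> complex)) set \<Rightarrow> ('a \<Rightarrow> complex) \<Rightarrow> 'a \<Rightarrow> bool" where
  "mero_at A f q \<longleftrightarrow> (\<exists>(U, \<phi>)\<in>A. q \<in> U \<and> (f \<circ> inv_into U \<phi>) meromorphic_on {\<phi> q})"

definition dX_simple_zero :: "('a set \<times> ('a \<Rightarrow> complex)) set \<Rightarrow> ('a \<Rightarrow> complex) \<Rightarrow> 'a \<Rightarrow> bool" where
  "dX_simple_zero A X q \<longleftrightarrow>
     (\<exists>(U, \<phi>)\<in>A. q \<in> U \<and> deriv (X \<circ> inv_into U \<phi>) (\<phi> q) = 0 \<and>
        deriv (deriv (X \<circ> inv_into U \<phi>)) (\<phi> q) \<noteq> 0)"

text \<open>The operator D = X d/dX, computed pointwise in a chart: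
  (D f)(q) = X(q) * (f o psi)'(z) / (X o psi)'(z), z = phi q.\<close>

definition Dop :: "('a set \<times> ('a \<Rightarrow> complex)) set \<Rightarrow> ('a \<Rightarrow> complex) \<Rightarrow> ('a \<Rightarrow> complex) \<Rightarrow> 'a \<Rightarrow> complex" where
  "Dop A X f q = (case chart_at A q of (U, \<phi>) \<Rightarrow>
      X q * deriv (f \<circ> inv_into U \<phi>) (\<phi> q) / deriv (X \<circ> inv_into U \<phi>) (\<phi> q))"

definition in_Xi_hat :: "'a topology \<Rightarrow> ('a set \<times> ('a \<Rightarrow> complex)) set \<Rightarrow> ('a \<Rightarrow> complex)
    \<Rightarrow> nat \<Rightarrow> (nat \<Rightarrow> 'a) \<Rightarrow> ('a \<Rightarrow> complex) \<Rightarrow> bool" where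
  "in_Xi_hat T A X N p g \<longleftrightarrow>
     (\<exists>(m::nat) (c::nat \<Rightarrow> complex) (j::nat \<Rightarrow> nat) (f::nat \<Rightarrow> 'a \<Rightarrow> complex).
        (\<forall>k<m. \<forall>i\<in>{1..N}. holo_at A (f k) (p i)) \<and>
        (\<forall>i\<in>{1..N}. \<exists>W. openin T W \<and> p i \<in> W \<and>
            (\<forall>q\<in>W - {p i}. g q = (\<Sum>k<m. c k * (Dop A X ^^ j k) (f k) q))))"

definition local_coordinate :: "'a topology \<Rightarrow> ('a set \<times> ('a \<Rightarrow> complex)) set \<Rightarrow> 'a
    \<Rightarrow> 'a set \<Rightarrow> ('a \<Rightarrow> complex) \<Rightarrow> bool" where
  "local_coordinate T A p W \<nu> \<longleftrightarrow>
     openin T W \<and> p \<in> W \<and> inj_on \<nu> W \<and>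
     (\<forall>q\<in>W. \<exists>(U, \<phi>)\<in>A. q \<in> U \<and> (\<nu> \<circ> inv_into U \<phi>) analytic_on {\<phi> q} \<and>
        deriv (\<nu> \<circ> inv_into U \<phi>) (\<phi> q) \<noteq> 0)"

definition sqrt_log_coordinate :: "('a set \<times> ('a \<Rightarrow> complex)) set \<Rightarrow> ('a \<Rightarrow> complex)
    \<Rightarrow> 'a \<Rightarrow> 'a set \<Rightarrow> ('a \<Rightarrow> complex) \<Rightarrow> bool" where
  "sqrt_log_coordinate A X p W \<nu> \<longleftrightarrow>
     (\<exists>x. (\<forall>q\<in>W. holo_at A x q \<and> exp (x q) = X q) \<and>
          (\<forall>q\<in>W. (\<nu> q)\<^sup>2 = x q - x p))"

definition odd_principal_part :: "complex fls \<Rightarrow> bool" where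
  "odd_principal_part F \<longleftrightarrow> (\<forall>n::int. n < 0 \<and> even n \<longrightarrow> fls_nth F n = 0)"

end

theory Submission
  imports Defs
begin

text \<open>
  Let \<nu> be a square-root coordinate at p, i.e. \<nu>^2 = log X - log X(p). Then dX = 2 \<nu> X d\<nu>, so
  D = X d/dX acts in this coordinate as f \<mapsto> f'(\<nu>) / (2 \<nu>), the derivative with respect to \<nu>^2.
  This operator sends \<nu>^n to (n/2) \<nu>^(n-2): it preserves parity and annihilates constants, so
  every D^j f with f holomorphic at p has an odd principal part in \<nu>, and so has every finite
  combination of such functions. Conversely \<nu>^(1-2k) is a nonzero multiple of D^k \<nu>, so a function
  with odd principal part is near p a holomorphic function plus a combination of the D^k (c_k \<nu>);
  such local representations at p_1, ..., p_N are glued on pairwise disjoint neighbourhoods.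
  Square-root coordinates exist by the holomorphic Morse lemma, since log X has a nondegenerate
  critical point at each p_i.
\<close>

section \<open>Charts and holomorphy at a point\<close>

lemma complex_chartD:
  assumes "complex_chart T (U, \<phi>)"
  shows "openin T U" "open (\<phi> ` U)" "inj_on \<phi> U" "U \<subseteq> topspace T"
    and "continuous_map (subtopology T U) (top_of_set (\<phi> ` U)) \<phi>"
proof -
  have hom: "homeomorphic_map (subtopology T U) (top_of_set (\<phi> ` U)) \<phi>"
    using assms by (simp add: complex_chart_def)
  show "openin T U" "open (\<phi> ` U)" using assms by (simp_all add: complex_chart_def)
  then show U: "U \<subseteq> topspace T" using openin_subset by blast
  show "inj_on \<phi> U" using homeomorphic_imp_injective_map[OF hom] U by (simp add: Int_absorb1)
  show "continuous_map (subtopology T U) (top_of_set (\<phi> ` U)) \<phi>"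
    using hom homeomorphic_imp_continuous_map by blast
qed

lemma complex_chart_open_image:
  assumes "complex_chart T (U, \<phi>)" "openin T Y"
  shows "open (\<phi> ` (U \<inter> Y))"
proof -
  have "openin (subtopology T U) (U \<inter> Y)"
    using assms(2) openin_subtopology_Int2 by blast
  moreover have hom: "homeomorphic_map (subtopology T U) (top_of_set (\<phi> ` U)) \<phi>"
    using assms(1) by (simp add: complex_chart_def)
  ultimately have "openin (top_of_set (\<phi> ` U)) (\<phi> ` (U \<inter> Y))"
    using homeomorphic_map_openness[OF hom, of "U \<inter> Y"] complex_chartD(4)[OF assms(1)] by auto
  then show ?thesis using complex_chartD(2)[OF assms(1)] openin_open_trans by blast
qed

lemma complex_chart_open_preimage:
  assumes "complex_chart T (U, \<phi>)" "open B"
  shows "openin T {q \<in> U. \<phi> q \<in> B}"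
proof -
  have "openin (subtopology T U) {q \<in> topspace (subtopology T U). \<phi> q \<in> \<phi> ` U \<inter> B}"
    by (rule openin_continuous_map_preimage[OF complex_chartD(5)[OF assms(1)]])
       (use assms(2) in \<open>auto simp: openin_open_Int\<close>)
  moreover have "{q \<in> topspace (subtopology T U). \<phi> q \<in> \<phi> ` U \<inter> B} = {q \<in> U. \<phi> q \<in> B}"
    using complex_chartD(4)[OF assms(1)] by auto
  ultimately show ?thesis using openin_trans_full complex_chartD(1)[OF assms(1)] by metis
qed

lemma eventually_chart_inverse_in:
  assumes "complex_chart T (U, \<phi>)" "openin T Y" "q \<in> U" "q \<in> Y"
  shows "\<forall>\<^sub>F z in nhds (\<phi> q). inv_into U \<phi> z \<in> U \<inter> Y \<and> \<phi> (inv_into U \<phi> z) = z"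
proof (rule eventually_nhds_in_open[OF complex_chart_open_image[OF assms(1,2)], THEN eventually_mono])
  show "\<phi> q \<in> \<phi> ` (U \<inter> Y)" using assms(3,4) by blast
next
  fix z assume "z \<in> \<phi> ` (U \<inter> Y)"
  then obtain y where "y \<in> U \<inter> Y" "z = \<phi> y" by blast
  then show "inv_into U \<phi> z \<in> U \<inter> Y \<and> \<phi> (inv_into U \<phi> z) = z"
    using inv_into_f_f[OF complex_chartD(3)[OF assms(1)]] by auto
qed

lemma holomorphic_atlas_chart: "holomorphic_atlas T A \<Longrightarrow> (U, \<phi>) \<in> A \<Longrightarrow> complex_chart T (U, \<phi>)"
  by (simp add: holomorphic_atlas_def)

lemma holomorphic_atlas_transition:
  assumes "holomorphic_atlas T A" "(U, \<phi>) \<in> A" "(V, \<rho>) \<in> A"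
  shows "(\<rho> \<circ> inv_into U \<phi>) holomorphic_on (\<phi> ` (U \<inter> V))"
proof -
  have "\<forall>(U, \<phi>)\<in>A. \<forall>(V, \<rho>)\<in>A. (\<rho> \<circ> inv_into U \<phi>) holomorphic_on (\<phi> ` (U \<inter> V))"
    using assms(1) by (simp add: holomorphic_atlas_def)
  with assms(2,3) show ?thesis by auto
qed

lemma chart_at_in_atlas:
  assumes "holomorphic_atlas T A" "q \<in> topspace T"
  shows "chart_at A q \<in> A" "q \<in> fst (chart_at A q)"
proof -
  have "\<exists>c. c \<in> A \<and> q \<in> fst c" using assms unfolding holomorphic_atlas_def by blast
  then have "chart_at A q \<in> A \<and> q \<in> fst (chart_at A q)"
    unfolding chart_at_def by (rule someI_ex)
  then show "chart_at A q \<in> A" "q \<in> fst (chart_at A q)" by auto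
qed

lemma holomorphic_atlas_chart_around:
  assumes "holomorphic_atlas T A" "q \<in> topspace T"
  obtains V \<rho> where "(V, \<rho>) \<in> A" "q \<in> V"
  using chart_at_in_atlas[OF assms] by (metis prod.collapse)

lemma holo_at_imp_analytic_in_chart:
  assumes atl: "holomorphic_atlas T A" and "holo_at A h q" and VA: "(V, \<rho>) \<in> A" and "q \<in> V"
  shows "(h \<circ> inv_into V \<rho>) analytic_on {\<rho> q}"
proof -
  obtain U \<phi> where UA: "(U, \<phi>) \<in> A" and "q \<in> U" and an: "(h \<circ> inv_into U \<phi>) analytic_on {\<phi> q}"
    using assms(2) unfolding holo_at_def by blast
  have cU: "complex_chart T (U, \<phi>)" and cV: "complex_chart T (V, \<rho>)"
    using atl UA VA holomorphic_atlas_chart by blast+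
  have "(\<phi> \<circ> inv_into V \<rho>) analytic_on \<rho> ` (V \<inter> U)"
    using holomorphic_atlas_transition[OF atl VA UA] complex_chart_open_image[OF cV complex_chartD(1)[OF cU]]
    by (simp add: analytic_on_open)
  then have "(\<phi> \<circ> inv_into V \<rho>) analytic_on {\<rho> q}"
    by (rule analytic_on_subset) (use \<open>q \<in> U\<close> \<open>q \<in> V\<close> in blast)
  moreover have "(\<phi> \<circ> inv_into V \<rho>) (\<rho> q) = \<phi> q"
    using inv_into_f_f[OF complex_chartD(3)[OF cV] \<open>q \<in> V\<close>] by simp
  ultimately have comp: "((h \<circ> inv_into U \<phi>) \<circ> (\<phi> \<circ> inv_into V \<rho>)) analytic_on {\<rho> q}"
    using an by (intro analytic_on_compose) auto
  have ev: "\<forall>\<^sub>F z in nhds (\<rho> q). ((h \<circ> inv_into U \<phi>) \<circ> (\<phi> \<circ> inv_into V \<rho>)) z = (h \<circ> inv_into V \<rho>) z"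
    using eventually_chart_inverse_in[OF cV complex_chartD(1)[OF cU] \<open>q \<in> V\<close> \<open>q \<in> U\<close>]
    by eventually_elim (use inv_into_f_f[OF complex_chartD(3)[OF cU]] in auto)
  show ?thesis using comp analytic_at_cong[OF ev refl] by (simp add: o_def)
qed

lemma holo_at_cong:
  assumes atl: "holomorphic_atlas T A" and "holo_at A h q" and "openin T Y" "q \<in> Y"
    and "\<forall>y\<in>Y. h y = h' y"
  shows "holo_at A h' q"
proof -
  obtain U \<phi> where UA: "(U, \<phi>) \<in> A" and "q \<in> U" and an: "(h \<circ> inv_into U \<phi>) analytic_on {\<phi> q}"
    using assms(2) unfolding holo_at_def by blast
  have ev: "\<forall>\<^sub>F z in nhds (\<phi> q). (h \<circ> inv_into U \<phi>) z = (h' \<circ> inv_into U \<phi>) z"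
    using eventually_chart_inverse_in[OF holomorphic_atlas_chart[OF atl UA] assms(3) \<open>q \<in> U\<close> assms(4)]
    by eventually_elim (use assms(5) in auto)
  have "(h' \<circ> inv_into U \<phi>) analytic_on {\<phi> q}" using an analytic_at_cong[OF ev refl] by (simp add: o_def)
  then show ?thesis unfolding holo_at_def using UA \<open>q \<in> U\<close> by blast
qed

lemma holo_at_const:
  assumes "holomorphic_atlas T A" "q \<in> topspace T"
  shows "holo_at A (\<lambda>_. c) q"
  using chart_at_in_atlas[OF assms] unfolding holo_at_def
  by (intro bexI[of _ "chart_at A q"]) (auto simp: o_def case_prod_unfold)

section \<open>Local coordinates\<close>

lemma local_coordinateD:
  assumes "local_coordinate T A p W \<nu>"
  shows "openin T W" "p \<in> W" "inj_on \<nu> W" "W \<subseteq> topspace T" "\<And>q. q \<in> W \<Longrightarrow> holo_at A \<nu> q"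
proof -
  show "openin T W" "p \<in> W" "inj_on \<nu> W" using assms by (simp_all add: local_coordinate_def)
  then show "W \<subseteq> topspace T" by (simp add: openin_subset)
  show "holo_at A \<nu> q" if q: "q \<in> W" for q
  proof -
    obtain U \<phi> where "(U, \<phi>) \<in> A" "q \<in> U" "(\<nu> \<circ> inv_into U \<phi>) analytic_on {\<phi> q}"
      using assms q unfolding local_coordinate_def by auto
    then show ?thesis unfolding holo_at_def by blast
  qed
qed

lemma local_coordinate_restrict:
  assumes "local_coordinate T A p W \<nu>" "openin T Y" "q \<in> W \<inter> Y"
  shows "local_coordinate T A q (W \<inter> Y) \<nu>"
  using assms unfolding local_coordinate_def by (auto intro: inj_on_subset)

lemma local_coordinate_in_chart:
  assumes atl: "holomorphic_atlas T A" and lc: "local_coordinate T A p W \<nu>"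
    and VA: "(V, \<rho>) \<in> A" and "q \<in> V" "q \<in> W"
  obtains S where "open S" "\<rho> q \<in> S" "inv_into V \<rho> ` S \<subseteq> W"
    "(\<nu> \<circ> inv_into V \<rho>) holomorphic_on S" "inj_on (\<nu> \<circ> inv_into V \<rho>) S"
proof -
  have cV: "complex_chart T (V, \<rho>)" using holomorphic_atlas_chart[OF atl VA] .
  have "(\<nu> \<circ> inv_into V \<rho>) analytic_on {\<rho> q}"
    using holo_at_imp_analytic_in_chart[OF atl local_coordinateD(5)[OF lc \<open>q \<in> W\<close>] VA \<open>q \<in> V\<close>] .
  then obtain e where "e > 0" and hol: "(\<nu> \<circ> inv_into V \<rho>) holomorphic_on ball (\<rho> q) e"
    unfolding analytic_on_def by blast
  define S where "S = ball (\<rho> q) e \<inter> \<rho> ` (V \<inter> W)"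
  have inv: "inv_into V \<rho> (\<rho> y) = y" if "y \<in> V" for y
    using inv_into_f_f[OF complex_chartD(3)[OF cV] that] .
  have "open S"
    unfolding S_def using complex_chart_open_image[OF cV local_coordinateD(1)[OF lc]] by blast
  moreover have "\<rho> q \<in> S" using \<open>e > 0\<close> \<open>q \<in> V\<close> \<open>q \<in> W\<close> by (simp add: S_def)
  moreover have "inv_into V \<rho> ` S \<subseteq> W" using inv by (auto simp: S_def)
  moreover have "(\<nu> \<circ> inv_into V \<rho>) holomorphic_on S"
    using hol by (rule holomorphic_on_subset) (simp add: S_def)
  moreover have "inj_on (\<nu> \<circ> inv_into V \<rho>) S"
  proof (rule inj_onI)
    fix z z' assume "z \<in> S" "z' \<in> S" and eq: "(\<nu> \<circ> inv_into V \<rho>) z = (\<nu> \<circ> inv_into V \<rho>) z'"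
    then obtain y y' where y: "y \<in> V \<inter> W" "z = \<rho> y" "y' \<in> V \<inter> W" "z' = \<rho> y'"
      by (auto simp: S_def)
    then have "\<nu> y = \<nu> y'" using eq inv by auto
    then have "y = y'" using inj_onD[OF local_coordinateD(3)[OF lc]] y by blast
    then show "z = z'" using y by simp
  qed
  ultimately show ?thesis by (rule that)
qed

lemma open_local_coordinate_image:
  assumes atl: "holomorphic_atlas T A" and lc: "local_coordinate T A p W \<nu>"
  shows "open (\<nu> ` W)"
  unfolding open_subopen[of "\<nu> ` W"]
proof
  fix w assume "w \<in> \<nu> ` W"
  then obtain q where "q \<in> W" "w = \<nu> q" by blast
  then have "q \<in> topspace T" using local_coordinateD(4)[OF lc] by blast
  then obtain V \<rho> where VA: "(V, \<rho>) \<in> A" and "q \<in> V" by (rule holomorphic_atlas_chart_around[OF atl])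
  obtain S where "open S" "\<rho> q \<in> S" and SW: "inv_into V \<rho> ` S \<subseteq> W"
    and hol: "(\<nu> \<circ> inv_into V \<rho>) holomorphic_on S" and inj: "inj_on (\<nu> \<circ> inv_into V \<rho>) S"
    using local_coordinate_in_chart[OF atl lc VA \<open>q \<in> V\<close> \<open>q \<in> W\<close>] .
  have "open ((\<nu> \<circ> inv_into V \<rho>) ` S)" using open_mapping_thm3[OF hol \<open>open S\<close> inj] .
  moreover have "w = (\<nu> \<circ> inv_into V \<rho>) (\<rho> q)"
    using inv_into_f_f[OF complex_chartD(3)[OF holomorphic_atlas_chart[OF atl VA]] \<open>q \<in> V\<close>] \<open>w = \<nu> q\<close>
    by simp
  then have "w \<in> (\<nu> \<circ> inv_into V \<rho>) ` S" using \<open>\<rho> q \<in> S\<close> by blast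
  moreover have "(\<nu> \<circ> inv_into V \<rho>) ` S \<subseteq> \<nu> ` W" using SW by auto
  ultimately show "\<exists>B. open B \<and> w \<in> B \<and> B \<subseteq> \<nu> ` W" by blast
qed

lemma eventually_local_coordinate_inverse_in:
  assumes atl: "holomorphic_atlas T A" and lc: "local_coordinate T A p W \<nu>"
    and "openin T Y" "q \<in> W \<inter> Y"
  shows "\<forall>\<^sub>F w in nhds (\<nu> q). inv_into W \<nu> w \<in> W \<inter> Y \<and> \<nu> (inv_into W \<nu> w) = w"
proof -
  have "open (\<nu> ` (W \<inter> Y))"
    using open_local_coordinate_image[OF atl local_coordinate_restrict[OF lc assms(3,4)]] .
  then have "\<forall>\<^sub>F w in nhds (\<nu> q). w \<in> \<nu> ` (W \<inter> Y)"
    using assms(4) by (intro eventually_nhds_in_open) auto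
  then show ?thesis
  proof eventually_elim
    case (elim w)
    then obtain y where "y \<in> W \<inter> Y" "w = \<nu> y" by blast
    then show ?case using inv_into_f_f[OF local_coordinateD(3)[OF lc]] by auto
  qed
qed

lemma openin_local_coordinate_preimage:
  assumes atl: "holomorphic_atlas T A" and lc: "local_coordinate T A p W \<nu>" and "open B"
  shows "openin T {q \<in> W. \<nu> q \<in> B}"
  unfolding openin_subopen[of T "{q \<in> W. \<nu> q \<in> B}"]
proof
  fix q assume q: "q \<in> {q \<in> W. \<nu> q \<in> B}"
  then have "q \<in> W" by simp
  then have "q \<in> topspace T" using local_coordinateD(4)[OF lc] by blast
  then obtain V \<rho> where VA: "(V, \<rho>) \<in> A" and "q \<in> V" by (rule holomorphic_atlas_chart_around[OF atl])
  have cV: "complex_chart T (V, \<rho>)" using holomorphic_atlas_chart[OF atl VA] .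
  obtain S where "open S" "\<rho> q \<in> S" and SW: "inv_into V \<rho> ` S \<subseteq> W"
    and hol: "(\<nu> \<circ> inv_into V \<rho>) holomorphic_on S" and "inj_on (\<nu> \<circ> inv_into V \<rho>) S"
    using local_coordinate_in_chart[OF atl lc VA \<open>q \<in> V\<close> \<open>q \<in> W\<close>] .
  have inv: "inv_into V \<rho> (\<rho> y) = y" if "y \<in> V" for y
    using inv_into_f_f[OF complex_chartD(3)[OF cV] that] .
  define Wq where "Wq = {y \<in> V. \<rho> y \<in> S \<inter> (\<nu> \<circ> inv_into V \<rho>) -` B}"
  have "continuous_on S (\<nu> \<circ> inv_into V \<rho>)" using hol by (rule holomorphic_on_imp_continuous_on)
  then have "open (S \<inter> (\<nu> \<circ> inv_into V \<rho>) -` B)"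
    by (simp add: continuous_on_open_vimage[OF \<open>open S\<close>] \<open>open B\<close> o_def Int_commute)
  then have "openin T Wq" unfolding Wq_def by (rule complex_chart_open_preimage[OF cV])
  moreover have "q \<in> Wq" using q \<open>q \<in> V\<close> \<open>\<rho> q \<in> S\<close> inv by (simp add: Wq_def)
  moreover have "Wq \<subseteq> {q \<in> W. \<nu> q \<in> B}" using SW inv by (force simp: Wq_def)
  ultimately show "\<exists>Wq. openin T Wq \<and> q \<in> Wq \<and> Wq \<subseteq> {q \<in> W. \<nu> q \<in> B}" by blast
qed

lemma holo_at_imp_analytic_local_coordinate:
  assumes atl: "holomorphic_atlas T A" and lc: "local_coordinate T A p W \<nu>" and "q \<in> W"
    and "holo_at A h q"
  shows "(\<lambda>w. h (inv_into W \<nu> w)) analytic_on {\<nu> q}"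
proof -
  have "q \<in> topspace T" using local_coordinateD(4)[OF lc] \<open>q \<in> W\<close> by blast
  then obtain V \<rho> where VA: "(V, \<rho>) \<in> A" and "q \<in> V" by (rule holomorphic_atlas_chart_around[OF atl])
  obtain S where "open S" "\<rho> q \<in> S" and SW: "inv_into V \<rho> ` S \<subseteq> W"
    and hol: "(\<nu> \<circ> inv_into V \<rho>) holomorphic_on S" and inj: "inj_on (\<nu> \<circ> inv_into V \<rho>) S"
    using local_coordinate_in_chart[OF atl lc VA \<open>q \<in> V\<close> \<open>q \<in> W\<close>] .
  define n where "n = \<nu> \<circ> inv_into V \<rho>"
  have nq: "n (\<rho> q) = \<nu> q"
    using inv_into_f_f[OF complex_chartD(3)[OF holomorphic_atlas_chart[OF atl VA]] \<open>q \<in> V\<close>]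
    by (simp add: n_def)
  obtain g where g: "g holomorphic_on n ` S"
    and "\<And>z. z \<in> S \<Longrightarrow> deriv n z * deriv g (n z) = 1" and gn: "\<And>z. z \<in> S \<Longrightarrow> g (n z) = z"
    using holomorphic_has_inverse[OF hol[folded n_def] \<open>open S\<close> inj[folded n_def]] by metis
  have "open (n ` S)" using open_mapping_thm3[OF hol \<open>open S\<close> inj] by (simp add: n_def)
  moreover have "\<nu> q \<in> n ` S" using \<open>\<rho> q \<in> S\<close> nq by (metis image_eqI)
  ultimately have "g analytic_on {\<nu> q}" by (rule holomorphic_on_imp_analytic_at[OF g])
  moreover have "(h \<circ> inv_into V \<rho>) analytic_on g ` {\<nu> q}"
    using holo_at_imp_analytic_in_chart[OF atl assms(4) VA \<open>q \<in> V\<close>] gn[OF \<open>\<rho> q \<in> S\<close>] nq by simp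
  ultimately have comp: "((h \<circ> inv_into V \<rho>) \<circ> g) analytic_on {\<nu> q}"
    by (rule analytic_on_compose)
  have "\<forall>\<^sub>F w in nhds (\<nu> q). w \<in> n ` S"
    using \<open>open (n ` S)\<close> \<open>\<nu> q \<in> n ` S\<close> by (rule eventually_nhds_in_open)
  then have ev: "\<forall>\<^sub>F w in nhds (\<nu> q). ((h \<circ> inv_into V \<rho>) \<circ> g) w = h (inv_into W \<nu> w)"
    by eventually_elim
      (use gn SW inv_into_f_f[OF local_coordinateD(3)[OF lc]] in \<open>auto simp: n_def image_subset_iff\<close>)
  show ?thesis using comp analytic_at_cong[OF ev refl] by simp
qed

lemma analytic_local_coordinate_imp_holo_at:
  assumes atl: "holomorphic_atlas T A" and lc: "local_coordinate T A p W \<nu>" and "q \<in> W"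
    and an: "(\<lambda>w. h (inv_into W \<nu> w)) analytic_on {\<nu> q}"
  shows "holo_at A h q"
proof -
  have "q \<in> topspace T" using local_coordinateD(4)[OF lc] \<open>q \<in> W\<close> by blast
  then obtain V \<rho> where VA: "(V, \<rho>) \<in> A" and "q \<in> V" by (rule holomorphic_atlas_chart_around[OF atl])
  obtain S where "open S" "\<rho> q \<in> S" and SW: "inv_into V \<rho> ` S \<subseteq> W"
    and hol: "(\<nu> \<circ> inv_into V \<rho>) holomorphic_on S" and "inj_on (\<nu> \<circ> inv_into V \<rho>) S"
    using local_coordinate_in_chart[OF atl lc VA \<open>q \<in> V\<close> \<open>q \<in> W\<close>] .
  have "(\<nu> \<circ> inv_into V \<rho>) analytic_on {\<rho> q}"
    using holomorphic_on_imp_analytic_at[OF hol \<open>open S\<close> \<open>\<rho> q \<in> S\<close>] .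
  moreover have "(\<lambda>w. h (inv_into W \<nu> w)) analytic_on (\<nu> \<circ> inv_into V \<rho>) ` {\<rho> q}"
    using an inv_into_f_f[OF complex_chartD(3)[OF holomorphic_atlas_chart[OF atl VA]] \<open>q \<in> V\<close>] by simp
  ultimately have comp: "((\<lambda>w. h (inv_into W \<nu> w)) \<circ> (\<nu> \<circ> inv_into V \<rho>)) analytic_on {\<rho> q}"
    by (rule analytic_on_compose)
  have "\<forall>\<^sub>F z in nhds (\<rho> q). z \<in> S"
    using \<open>open S\<close> \<open>\<rho> q \<in> S\<close> by (rule eventually_nhds_in_open)
  then have ev: "\<forall>\<^sub>F z in nhds (\<rho> q).
      ((\<lambda>w. h (inv_into W \<nu> w)) \<circ> (\<nu> \<circ> inv_into V \<rho>)) z = (h \<circ> inv_into V \<rho>) z"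
    by eventually_elim (use SW inv_into_f_f[OF local_coordinateD(3)[OF lc]] in \<open>auto simp: image_subset_iff\<close>)
  have "(h \<circ> inv_into V \<rho>) analytic_on {\<rho> q}"
    using comp analytic_at_cong[OF ev refl] by (simp add: o_def)
  then show ?thesis unfolding holo_at_def using VA \<open>q \<in> V\<close> by blast
qed

lemma holo_at_comp_local_coordinate:
  assumes atl: "holomorphic_atlas T A" and lc: "local_coordinate T A p W \<nu>" and "q \<in> W"
    and "k analytic_on {\<nu> q}"
  shows "holo_at A (\<lambda>y. k (\<nu> y)) q"
proof (rule analytic_local_coordinate_imp_holo_at[OF atl lc \<open>q \<in> W\<close>])
  have "\<forall>\<^sub>F w in nhds (\<nu> q). w \<in> \<nu> ` W"
    using open_local_coordinate_image[OF atl lc] \<open>q \<in> W\<close> by (intro eventually_nhds_in_open) auto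
  then have ev: "\<forall>\<^sub>F w in nhds (\<nu> q). k w = k (\<nu> (inv_into W \<nu> w))"
    by eventually_elim (simp add: f_inv_into_f)
  show "(\<lambda>w. k (\<nu> (inv_into W \<nu> w))) analytic_on {\<nu> q}"
    by (rule iffD1[OF analytic_at_cong[OF ev refl] assms(4)])
qed

lemma eventually_at_local_coordinate_iff:
  assumes atl: "holomorphic_atlas T A" and lc: "local_coordinate T A p W \<nu>"
  shows "(\<exists>W'. openin T W' \<and> p \<in> W' \<and> (\<forall>q\<in>W' - {p}. P q)) \<longleftrightarrow>
    (\<forall>\<^sub>F w in at (\<nu> p). P (inv_into W \<nu> w))"
proof
  assume "\<exists>W'. openin T W' \<and> p \<in> W' \<and> (\<forall>q\<in>W' - {p}. P q)"
  then obtain W' where "openin T W'" "p \<in> W'" and P: "\<forall>q\<in>W' - {p}. P q" by blast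
  have "\<forall>\<^sub>F w in nhds (\<nu> p). inv_into W \<nu> w \<in> W \<inter> W' \<and> \<nu> (inv_into W \<nu> w) = w"
    using eventually_local_coordinate_inverse_in[OF atl lc \<open>openin T W'\<close>] \<open>p \<in> W'\<close>
      local_coordinateD(2)[OF lc] by blast
  then show "\<forall>\<^sub>F w in at (\<nu> p). P (inv_into W \<nu> w)"
    unfolding eventually_at_filter by eventually_elim (use P in force)
next
  assume "\<forall>\<^sub>F w in at (\<nu> p). P (inv_into W \<nu> w)"
  then obtain d where "d > 0" and d: "\<And>w. w \<noteq> \<nu> p \<Longrightarrow> dist w (\<nu> p) < d \<Longrightarrow> P (inv_into W \<nu> w)"
    unfolding eventually_at by blast
  define W' where "W' = {q \<in> W. \<nu> q \<in> ball (\<nu> p) d}"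
  have "openin T W'"
    unfolding W'_def by (rule openin_local_coordinate_preimage[OF atl lc open_ball])
  moreover have "p \<in> W'" using \<open>d > 0\<close> local_coordinateD(2)[OF lc] by (simp add: W'_def)
  moreover have "P q" if "q \<in> W' - {p}" for q
  proof -
    have "q \<in> W" "dist (\<nu> q) (\<nu> p) < d" using that by (auto simp: W'_def dist_commute)
    moreover have "\<nu> q \<noteq> \<nu> p"
      using that inj_onD[OF local_coordinateD(3)[OF lc] _ _ local_coordinateD(2)[OF lc]]
      by (auto simp: W'_def)
    ultimately show "P q" using d[of "\<nu> q"] inv_into_f_f[OF local_coordinateD(3)[OF lc]] by simp
  qed
  ultimately show "\<exists>W'. openin T W' \<and> p \<in> W' \<and> (\<forall>q\<in>W' - {p}. P q)" by blast
qed

section \<open>The derivative with respect to the square of the variable\<close>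

lemma sq_deriv_iterate_holomorphic:
  fixes H :: "nat \<Rightarrow> complex \<Rightarrow> complex"
  assumes "open S" "0 \<notin> S"
    and rec: "\<And>j w. w \<in> S \<Longrightarrow> H j field_differentiable (at w) \<Longrightarrow> H (Suc j) w = deriv (H j) w / (2 * w)"
    and "H 0 holomorphic_on S"
  shows "H j holomorphic_on S"
proof (induction j)
  case (Suc j)
  have "(\<lambda>w. deriv (H j) w / (2 * w)) holomorphic_on S"
    using Suc.IH assms(1,2) by (auto intro!: holomorphic_intros holomorphic_deriv)
  moreover have "deriv (H j) w / (2 * w) = H (Suc j) w" if "w \<in> S" for w
    using rec[OF that holomorphic_on_imp_differentiable_at[OF Suc.IH assms(1) that]] by simp
  ultimately show ?case by (rule holomorphic_transform)
qed (fact assms(4))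

definition sq_deriv_coeff :: "nat \<Rightarrow> complex" where
  "sq_deriv_coeff j = (\<Prod>i<j. (1 - 2 * of_nat i) / 2)"

lemma sq_deriv_coeff_nonzero: "sq_deriv_coeff j \<noteq> 0"
proof -
  have "(1 - 2 * of_nat i :: complex) \<noteq> 0" for i :: nat
  proof
    assume "(1 - 2 * of_nat i :: complex) = 0"
    then have "of_nat (2 * i) = (of_nat 1 :: complex)" by simp
    then have "2 * i = 1" by (simp only: of_nat_eq_iff)
    then show False by presburger
  qed
  then show ?thesis by (simp add: sq_deriv_coeff_def)
qed

lemma sq_deriv_iterate_monomial:
  fixes H :: "nat \<Rightarrow> complex \<Rightarrow> complex"
  assumes S: "open S" "0 \<notin> S"
    and rec: "\<And>j w. w \<in> S \<Longrightarrow> H j field_differentiable (at w) \<Longrightarrow> H (Suc j) w = deriv (H j) w / (2 * w)"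
    and H0: "\<And>w. w \<in> S \<Longrightarrow> H 0 w = c * w"
    and "w \<in> S"
  shows "H j w = c * sq_deriv_coeff j * w powi (1 - 2 * int j)"
  using \<open>w \<in> S\<close>
proof (induction j arbitrary: w)
  case 0
  then show ?case using H0 by (simp add: sq_deriv_coeff_def)
next
  case (Suc j)
  define a where "a = c * sq_deriv_coeff j"
  define m where "m = 1 - 2 * int j"
  have "H 0 holomorphic_on S" by (rule holomorphic_transform[of "\<lambda>w. c * w"]) (auto simp: H0)
  with S rec have hol: "H j holomorphic_on S" by (rule sq_deriv_iterate_holomorphic)
  have "\<forall>\<^sub>F v in nhds w. H j v = a * v powi m"
    using eventually_nhds_in_open[OF \<open>open S\<close> Suc.prems]
    by eventually_elim (simp add: Suc.IH a_def m_def)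
  moreover have "((\<lambda>v. a * v powi m) has_field_derivative a * (of_int m * w powi (m - 1))) (at w)"
    using Suc.prems S(2) by (auto intro!: derivative_eq_intros)
  ultimately have "deriv (H j) w = a * (of_int m * w powi (m - 1))"
    using DERIV_imp_deriv deriv_cong_ev[OF _ refl] by metis
  moreover have "w \<noteq> 0" using Suc.prems S(2) by auto
  ultimately have "H (Suc j) w = (a * (of_int m / 2)) * (w powi (m - 1) / w)"
    using rec[OF Suc.prems holomorphic_on_imp_differentiable_at[OF hol \<open>open S\<close> Suc.prems]]
    by (simp add: field_simps)
  also have "w powi (m - 1) / w = w powi (m - 1 - 1)"
    using power_int_diff[of w "m - 1" 1] \<open>w \<noteq> 0\<close> by simp
  also have "m - 1 - 1 = 1 - 2 * int (Suc j)" by (simp add: m_def)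
  also have "a * (of_int m / 2) = c * sq_deriv_coeff (Suc j)"
    by (simp add: a_def m_def sq_deriv_coeff_def)
  finally show ?case .
qed

lemma has_laurent_expansion_sq_deriv:
  assumes "f has_laurent_expansion F"
  shows "(\<lambda>w. deriv f w / (2 * w)) has_laurent_expansion fls_const (1/2) * fls_shift 1 (fls_deriv F)"
proof -
  have "(\<lambda>w. 1/2 * (deriv f w * w powi (-1))) has_laurent_expansion
      fls_const (1/2) * fls_shift 1 (fls_deriv F)"
    using has_laurent_expansion_cmult_left[OF has_laurent_expansion_shift'[OF has_laurent_expansion_deriv[OF assms], of 1], of "1/2"] .
  moreover have "(\<lambda>w. 1/2 * (deriv f w * w powi (-1))) = (\<lambda>w. deriv f w / (2 * w))"
    by (simp add: power_int_minus field_simps)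
  ultimately show ?thesis by simp
qed

lemma odd_principal_part_sq_deriv:
  assumes "odd_principal_part F"
  shows "odd_principal_part (fls_const (1/2) * fls_shift 1 (fls_deriv F))"
  unfolding odd_principal_part_def
proof (intro allI impI)
  fix n :: int assume n: "n < 0 \<and> even n"
  show "fls_nth (fls_const (1/2) * fls_shift 1 (fls_deriv F)) n = 0"
  proof (cases "n = -2")
    case False
    then have "n + 1 + 1 < 0 \<and> even (n + 1 + 1)" using n by auto
    then have "fls_nth F (n + 1 + 1) = 0" using assms by (simp add: odd_principal_part_def)
    then show ?thesis by simp
  qed simp
qed

lemma odd_principal_part_sum:
  assumes "\<And>k. k \<in> I \<Longrightarrow> odd_principal_part (G k)"
  shows "odd_principal_part (\<Sum>k\<in>I. fls_const (c k) * G k)"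
  using assms by (simp add: odd_principal_part_def fls_nth_sum)

lemma sq_deriv_iterate_odd_principal_part:
  fixes H :: "nat \<Rightarrow> complex \<Rightarrow> complex"
  assumes "r > 0"
    and rec: "\<And>j w. w \<in> ball 0 r - {0} \<Longrightarrow> H j field_differentiable (at w) \<Longrightarrow>
      H (Suc j) w = deriv (H j) w / (2 * w)"
    and hol0: "H 0 holomorphic_on ball 0 r"
  shows "\<exists>F. H j has_laurent_expansion F \<and> odd_principal_part F"
proof (induction j)
  case 0
  have "H 0 analytic_on {0}" using holomorphic_on_imp_analytic_at[OF hol0] \<open>r > 0\<close> by simp
  then have "H 0 has_laurent_expansion fps_to_fls (fps_expansion (H 0) 0)"
    by (intro has_laurent_expansion_fps analytic_at_imp_has_fps_expansion_0)
  moreover have "odd_principal_part (fps_to_fls (fps_expansion (H 0) 0))"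
    by (simp add: odd_principal_part_def)
  ultimately show ?case by blast
next
  case (Suc j)
  then obtain F where F: "H j has_laurent_expansion F" "odd_principal_part F" by blast
  have "H 0 holomorphic_on ball 0 r - {0}" using hol0 by (rule holomorphic_on_subset) blast
  with _ _ rec have hol: "H j holomorphic_on ball 0 r - {0}"
    by (rule sq_deriv_iterate_holomorphic) auto
  have "\<forall>\<^sub>F w in at 0. w \<in> ball 0 r - {0}" using \<open>r > 0\<close> by (intro eventually_at_in_open) auto
  then have ev: "\<forall>\<^sub>F w in at 0. deriv (H j) w / (2 * w) = H (Suc j) w"
  proof eventually_elim
    case (elim w)
    have "open (ball (0::complex) r - {0})" by auto
    then show ?case using rec[OF elim holomorphic_on_imp_differentiable_at[OF hol _ elim]] by simp
  qed
  have "H (Suc j) has_laurent_expansion fls_const (1/2) * fls_shift 1 (fls_deriv F)"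
    using has_laurent_expansion_sq_deriv[OF F(1)] has_laurent_expansion_cong[OF ev refl] by simp
  then show ?case using odd_principal_part_sq_deriv[OF F(2)] by blast
qed

lemma odd_principal_part_subdegree_diff:
  fixes F :: "complex fls"
  assumes odd: "odd_principal_part F" and M: "- fls_subdegree F \<le> int M"
  shows "0 \<le> fls_subdegree
    (F - (\<Sum>k<M. fls_const (fls_nth F (- (2 * int k + 1))) * fls_X_intpow (- (2 * int k + 1))))"
proof (rule fls_subdegree_ge0I)
  fix n :: int assume "n < 0"
  have sum_nth: "fls_nth (\<Sum>k<M. fls_const (fls_nth F (- (2 * int k + 1))) * fls_X_intpow (- (2 * int k + 1))) n =
      (\<Sum>k<M. if n = - (2 * int k + 1) then fls_nth F n else 0)"
    by (auto simp: fls_nth_sum fls_X_intpow_times_conv_shift intro!: sum.cong)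
  show "fls_nth (F - (\<Sum>k<M. fls_const (fls_nth F (- (2 * int k + 1))) * fls_X_intpow (- (2 * int k + 1)))) n = 0"
    unfolding fls_minus_nth sum_nth
  proof (cases "fls_nth F n = 0")
    case True
    then show "fls_nth F n - (\<Sum>k<M. if n = - (2 * int k + 1) then fls_nth F n else 0) = 0"
      by (simp only: if_cancel sum.neutral_const diff_zero)
  next
    case False
    then have "odd n" using odd \<open>n < 0\<close> by (auto simp: odd_principal_part_def)
    then obtain m where m: "n = 2 * m + 1" by (auto elim: oddE)
    define k0 where "k0 = nat (- m - 1)"
    have k0: "int k0 = - m - 1" using \<open>n < 0\<close> m by (simp add: k0_def)
    have "fls_subdegree F \<le> n" using False by (rule fls_subdegree_leI)
    then have "k0 < M" using M k0 m \<open>n < 0\<close> by linarith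
    have "n = - (2 * int k + 1) \<longleftrightarrow> k = k0" for k using k0 m by auto
    then have "(\<Sum>k<M. if n = - (2 * int k + 1) then fls_nth F n else 0) = fls_nth F n"
      using \<open>k0 < M\<close> by simp
    then show "fls_nth F n - (\<Sum>k<M. if n = - (2 * int k + 1) then fls_nth F n else 0) = 0"
      by (simp only: diff_self)
  qed
qed

lemma has_laurent_expansion_odd_principal_part_decompose:
  assumes f: "f has_laurent_expansion F" and odd: "odd_principal_part F"
  obtains G M where "G analytic_on {0}"
    "\<forall>\<^sub>F w in at 0. f w = G w + (\<Sum>k<M. fls_nth F (- (2 * int k + 1)) * w powi (- (2 * int k + 1)))"
proof -
  define M where "M = nat (- fls_subdegree F)"
  define P where "P = (\<lambda>w. \<Sum>k<M. fls_nth F (- (2 * int k + 1)) * w powi (- (2 * int k + 1)))"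
  define R where "R = F - (\<Sum>k<M. fls_const (fls_nth F (- (2 * int k + 1))) * fls_X_intpow (- (2 * int k + 1)))"
  have "P has_laurent_expansion
      (\<Sum>k<M. fls_const (fls_nth F (- (2 * int k + 1))) * fls_X_intpow (- (2 * int k + 1)))"
    unfolding P_def
    by (intro has_laurent_expansion_sum has_laurent_expansion_cmult_left has_laurent_expansion_fps_X_power_int)
  then have R: "(\<lambda>w. f w - P w) has_laurent_expansion R"
    unfolding R_def by (rule has_laurent_expansion_diff[OF f])
  have "0 \<le> fls_subdegree R"
    unfolding R_def by (rule odd_principal_part_subdegree_diff[OF odd]) (simp add: M_def)
  moreover have "0 < fls_conv_radius R" using R by (simp add: has_laurent_expansion_def)
  ultimately have "eval_fls R analytic_on {0}"
    by (intro analytic_on_eval_fls) (auto simp: zero_ereal_def)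
  moreover have "\<forall>\<^sub>F w in at 0. f w = eval_fls R w + P w"
    using R unfolding has_laurent_expansion_def by (auto elim: eventually_mono)
  ultimately show ?thesis using that unfolding P_def by blast
qed

section \<open>The operator D in a square-root coordinate\<close>

lemma Dop_cong:
  assumes atl: "holomorphic_atlas T A" and "openin T Y" "\<forall>y\<in>Y. h y = h' y" "q \<in> Y"
  shows "Dop A X h q = Dop A X h' q"
proof -
  obtain V \<rho> where cq: "chart_at A q = (V, \<rho>)" by (cases "chart_at A q")
  have "q \<in> topspace T" using assms(2,4) openin_subset by blast
  then have VA: "(V, \<rho>) \<in> A" and "q \<in> V" using chart_at_in_atlas[OF atl, of q] cq by auto
  have "\<forall>\<^sub>F z in nhds (\<rho> q). (h \<circ> inv_into V \<rho>) z = (h' \<circ> inv_into V \<rho>) z"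
    using eventually_chart_inverse_in[OF holomorphic_atlas_chart[OF atl VA] assms(2) \<open>q \<in> V\<close> assms(4)]
    by eventually_elim (use assms(3) in auto)
  then have "deriv (h \<circ> inv_into V \<rho>) (\<rho> q) = deriv (h' \<circ> inv_into V \<rho>) (\<rho> q)"
    by (rule deriv_cong_ev) (rule refl)
  then show ?thesis unfolding Dop_def cq by simp
qed

lemma Dop_power_cong:
  assumes "holomorphic_atlas T A" "openin T Y" "\<forall>y\<in>Y. h y = h' y"
  shows "\<forall>y\<in>Y. (Dop A X ^^ k) h y = (Dop A X ^^ k) h' y"
proof (induction k)
  case (Suc k)
  have "Dop A X ((Dop A X ^^ k) h) y = Dop A X ((Dop A X ^^ k) h') y" if "y \<in> Y" for y
    by (rule Dop_cong[OF assms(1,2) Suc.IH that])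
  then show ?case by simp
qed (use assms(3) in simp)

lemma Dop_zero: "Dop A X (\<lambda>_. 0) = (\<lambda>_. 0)"
  by (rule ext) (simp add: Dop_def o_def case_prod_unfold)

lemma Dop_power_zero: "(Dop A X ^^ k) (\<lambda>_. 0) = (\<lambda>_. 0)"
  by (induction k) (simp_all add: Dop_zero)

lemma sqrt_log_coordinate_exp:
  assumes "sqrt_log_coordinate A X p W \<nu>" "p \<in> W"
  obtains c where "\<forall>q\<in>W. X q = exp ((\<nu> q)\<^sup>2 + c)" "\<nu> p = 0"
proof -
  obtain x where "\<forall>q\<in>W. exp (x q) = X q" and sq: "\<forall>q\<in>W. (\<nu> q)\<^sup>2 = x q - x p"
    using assms(1) unfolding sqrt_log_coordinate_def by blast
  then have "\<forall>q\<in>W. X q = exp ((\<nu> q)\<^sup>2 + x p)" by simp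
  moreover have "(\<nu> p)\<^sup>2 = 0" using sq assms(2) by simp
  then have "\<nu> p = 0" by simp
  ultimately show ?thesis by (rule that)
qed

lemma Dop_local_coordinate:
  assumes atl: "holomorphic_atlas T A" and lc: "local_coordinate T A p W \<nu>"
    and X: "\<forall>q\<in>W. X q = exp ((\<nu> q)\<^sup>2 + c)" and w: "w \<in> \<nu> ` W" "w \<noteq> 0"
    and hd: "(\<lambda>w. h (inv_into W \<nu> w)) field_differentiable (at w)"
  shows "Dop A X h (inv_into W \<nu> w) = deriv (\<lambda>w. h (inv_into W \<nu> w)) w / (2 * w)"
proof -
  define q where "q = inv_into W \<nu> w"
  define H where "H = (\<lambda>w. h (inv_into W \<nu> w))"
  have "q \<in> W" "\<nu> q = w" using w(1) by (auto simp: q_def inv_into_into f_inv_into_f)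
  obtain V \<rho> where cq: "chart_at A q = (V, \<rho>)" by (cases "chart_at A q")
  have "q \<in> topspace T" using \<open>q \<in> W\<close> local_coordinateD(4)[OF lc] by blast
  then have VA: "(V, \<rho>) \<in> A" and "q \<in> V" using chart_at_in_atlas[OF atl, of q] cq by auto
  obtain S where "open S" "\<rho> q \<in> S" and SW: "inv_into V \<rho> ` S \<subseteq> W"
    and hol: "(\<nu> \<circ> inv_into V \<rho>) holomorphic_on S" and inj: "inj_on (\<nu> \<circ> inv_into V \<rho>) S"
    using local_coordinate_in_chart[OF atl lc VA \<open>q \<in> V\<close> \<open>q \<in> W\<close>] .
  define n where "n = \<nu> \<circ> inv_into V \<rho>"
  have on_S: "h (inv_into V \<rho> z) = H (n z) \<and> X (inv_into V \<rho> z) = exp ((n z)\<^sup>2 + c)"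
    if "z \<in> S" for z
    using SW that X inv_into_f_f[OF local_coordinateD(3)[OF lc]] by (auto simp: n_def H_def)
  have nq: "n (\<rho> q) = w"
    using inv_into_f_f[OF complex_chartD(3)[OF holomorphic_atlas_chart[OF atl VA]] \<open>q \<in> V\<close>] \<open>\<nu> q = w\<close>
    by (simp add: n_def)
  have dn: "(n has_field_derivative deriv n (\<rho> q)) (at (\<rho> q))"
    using holomorphic_derivI[OF hol \<open>open S\<close> \<open>\<rho> q \<in> S\<close>] by (simp add: n_def)
  have dn0: "deriv n (\<rho> q) \<noteq> 0"
    using holomorphic_injective_imp_regular[OF hol \<open>open S\<close> inj \<open>\<rho> q \<in> S\<close>] by (simp add: n_def)
  have "(H has_field_derivative deriv H w) (at (n (\<rho> q)))"
    using hd nq by (simp add: H_def DERIV_deriv_iff_field_differentiable)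
  from DERIV_chain2[OF this dn]
  have dh: "((h \<circ> inv_into V \<rho>) has_field_derivative deriv H w * deriv n (\<rho> q)) (at (\<rho> q))"
    by (rule has_field_derivative_transform_within_open[OF _ \<open>open S\<close> \<open>\<rho> q \<in> S\<close>]) (use on_S in simp)
  have "((\<lambda>u. exp (u\<^sup>2 + c)) has_field_derivative exp (w\<^sup>2 + c) * (2 * w)) (at (n (\<rho> q)))"
    using nq by (auto intro!: derivative_eq_intros)
  from DERIV_chain2[OF this dn]
  have dX: "((X \<circ> inv_into V \<rho>) has_field_derivative exp (w\<^sup>2 + c) * (2 * w) * deriv n (\<rho> q)) (at (\<rho> q))"
    by (rule has_field_derivative_transform_within_open[OF _ \<open>open S\<close> \<open>\<rho> q \<in> S\<close>]) (use on_S in simp)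
  have "X q = exp (w\<^sup>2 + c)" using X \<open>q \<in> W\<close> \<open>\<nu> q = w\<close> by simp
  then show ?thesis
    using DERIV_imp_deriv[OF dh] DERIV_imp_deriv[OF dX] dn0 w(2)
    by (simp add: Dop_def cq q_def[symmetric] H_def[symmetric])
qed

lemma Dop_power_odd_principal_part:
  assumes atl: "holomorphic_atlas T A" and lc: "local_coordinate T A p W \<nu>"
    and X: "\<forall>q\<in>W. X q = exp ((\<nu> q)\<^sup>2 + c)" and "\<nu> p = 0" and "holo_at A h p"
  shows "\<exists>F. (\<lambda>w. (Dop A X ^^ j) h (inv_into W \<nu> w)) has_laurent_expansion F \<and> odd_principal_part F"
proof -
  have "(\<lambda>w. h (inv_into W \<nu> w)) analytic_on {0}"
    using holo_at_imp_analytic_local_coordinate[OF atl lc local_coordinateD(2)[OF lc] assms(5)] assms(4)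
    by simp
  then obtain s where "s > 0" and hol: "(\<lambda>w. h (inv_into W \<nu> w)) holomorphic_on ball 0 s"
    unfolding analytic_on_def by blast
  have "0 \<in> \<nu> ` W" using \<open>\<nu> p = 0\<close> local_coordinateD(2)[OF lc] by force
  then obtain r where "r > 0" and r: "ball 0 r \<subseteq> \<nu> ` W"
    using open_local_coordinate_image[OF atl lc] by (meson openE)
  have "(\<lambda>w. h (inv_into W \<nu> w)) holomorphic_on ball 0 (min r s)"
    using hol by (rule holomorphic_on_subset) auto
  then show ?thesis
  proof (intro sq_deriv_iterate_odd_principal_part[of "min r s"])
    fix i w
    assume "w \<in> ball 0 (min r s) - {0}"
      and "(\<lambda>w. (Dop A X ^^ i) h (inv_into W \<nu> w)) field_differentiable (at w)"
    then show "(Dop A X ^^ Suc i) h (inv_into W \<nu> w) =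
        deriv (\<lambda>w. (Dop A X ^^ i) h (inv_into W \<nu> w)) w / (2 * w)"
      using Dop_local_coordinate[OF atl lc X] r by auto
  qed (use \<open>r > 0\<close> \<open>s > 0\<close> in auto)
qed

lemma Dop_power_local_coordinate_monomial:
  assumes atl: "holomorphic_atlas T A" and lc: "local_coordinate T A p W \<nu>"
    and X: "\<forall>q\<in>W. X q = exp ((\<nu> q)\<^sup>2 + c)" and "w \<in> \<nu> ` W" "w \<noteq> 0"
  shows "(Dop A X ^^ j) (\<lambda>q. b * \<nu> q) (inv_into W \<nu> w) = b * sq_deriv_coeff j * w powi (1 - 2 * int j)"
proof (rule sq_deriv_iterate_monomial[of "\<nu> ` W - {0}"])
  show "open (\<nu> ` W - {0})" using open_local_coordinate_image[OF atl lc] by auto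
next
  fix i v
  assume "v \<in> \<nu> ` W - {0}"
    and "(\<lambda>w. (Dop A X ^^ i) (\<lambda>q. b * \<nu> q) (inv_into W \<nu> w)) field_differentiable (at v)"
  then show "(Dop A X ^^ Suc i) (\<lambda>q. b * \<nu> q) (inv_into W \<nu> v) =
      deriv (\<lambda>w. (Dop A X ^^ i) (\<lambda>q. b * \<nu> q) (inv_into W \<nu> w)) v / (2 * v)"
    using Dop_local_coordinate[OF atl lc X] by auto
qed (use assms(4,5) in \<open>auto simp: f_inv_into_f\<close>)

section \<open>Local description of Xi-hat\<close>

lemma Dop_combination_odd_principal_part:
  assumes atl: "holomorphic_atlas T A"
    and lc: "local_coordinate T A p W \<nu>" and sl: "sqrt_log_coordinate A X p W \<nu>"
    and hf: "\<forall>k<m. holo_at A (f k) p" and "openin T Wg" "p \<in> Wg"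
    and g: "\<forall>q\<in>Wg - {p}. g q = (\<Sum>k<m. c k * (Dop A X ^^ j k) (f k) q)"
  shows "\<exists>F. (\<lambda>w. g (inv_into W \<nu> w)) has_laurent_expansion F \<and> odd_principal_part F"
proof -
  obtain c0 where X: "\<forall>q\<in>W. X q = exp ((\<nu> q)\<^sup>2 + c0)" and "\<nu> p = 0"
    using sqrt_log_coordinate_exp[OF sl local_coordinateD(2)[OF lc]] by blast
  have "\<forall>k\<in>{..<m}. \<exists>F. (\<lambda>w. (Dop A X ^^ j k) (f k) (inv_into W \<nu> w)) has_laurent_expansion F \<and>
      odd_principal_part F"
    using Dop_power_odd_principal_part[OF atl lc X \<open>\<nu> p = 0\<close>] hf by blast
  then obtain F where F: "\<And>k. k < m \<Longrightarrow>
      (\<lambda>w. (Dop A X ^^ j k) (f k) (inv_into W \<nu> w)) has_laurent_expansion F k \<and> odd_principal_part (F k)"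
    by (metis lessThan_iff bchoice)
  have "(\<lambda>w. \<Sum>k<m. c k * (Dop A X ^^ j k) (f k) (inv_into W \<nu> w)) has_laurent_expansion
      (\<Sum>k<m. fls_const (c k) * F k)"
    using F by (intro has_laurent_expansion_sum has_laurent_expansion_cmult_left) auto
  moreover have "\<forall>\<^sub>F w in at (\<nu> p). (\<Sum>k<m. c k * (Dop A X ^^ j k) (f k) (inv_into W \<nu> w)) = g (inv_into W \<nu> w)"
    using \<open>openin T Wg\<close> \<open>p \<in> Wg\<close> g
    by (intro eventually_at_local_coordinate_iff[OF atl lc, THEN iffD1] exI[of _ Wg]) auto
  moreover have "odd_principal_part (\<Sum>k<m. fls_const (c k) * F k)"
    using F by (intro odd_principal_part_sum) auto
  ultimately show ?thesis using has_laurent_expansion_cong[OF _ refl] \<open>\<nu> p = 0\<close> by fastforce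
qed

lemma Dop_power_local_coordinate_odd_power:
  assumes atl: "holomorphic_atlas T A" and lc: "local_coordinate T A p W \<nu>"
    and X: "\<forall>q\<in>W. X q = exp ((\<nu> q)\<^sup>2 + c)" and "w \<in> \<nu> ` W" "w \<noteq> 0"
  shows "(Dop A X ^^ Suc k) (\<lambda>q. a / sq_deriv_coeff (Suc k) * \<nu> q) (inv_into W \<nu> w) =
    a * w powi (- (2 * int k + 1))"
proof -
  have "(Dop A X ^^ Suc k) (\<lambda>q. a / sq_deriv_coeff (Suc k) * \<nu> q) (inv_into W \<nu> w) =
      a / sq_deriv_coeff (Suc k) * sq_deriv_coeff (Suc k) * w powi (1 - 2 * int (Suc k))"
    by (rule Dop_power_local_coordinate_monomial[OF atl lc X assms(4,5)])
  also have "1 - 2 * int (Suc k) = - (2 * int k + 1)" by simp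
  also have "a / sq_deriv_coeff (Suc k) * sq_deriv_coeff (Suc k) = a"
    using sq_deriv_coeff_nonzero[of "Suc k"] by simp
  finally show ?thesis .
qed

definition Xi_hat_at :: "'a topology \<Rightarrow> ('a set \<times> ('a \<Rightarrow> complex)) set \<Rightarrow> ('a \<Rightarrow> complex)
    \<Rightarrow> 'a \<Rightarrow> ('a \<Rightarrow> complex) \<Rightarrow> bool" where
  "Xi_hat_at T A X a g \<longleftrightarrow>
     (\<exists>K \<phi> W. (\<forall>k<K. holo_at A (\<phi> k) a) \<and> openin T W \<and> a \<in> W \<and>
        (\<forall>q\<in>W - {a}. g q = (\<Sum>k<K. (Dop A X ^^ k) (\<phi> k) q)))"

lemma odd_principal_part_imp_Xi_hat_at:
  assumes atl: "holomorphic_atlas T A"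
    and lc: "local_coordinate T A p W \<nu>" and sl: "sqrt_log_coordinate A X p W \<nu>"
    and g: "(\<lambda>w. g (inv_into W \<nu> w)) has_laurent_expansion F" and odd: "odd_principal_part F"
  shows "Xi_hat_at T A X p g"
proof -
  obtain c where X: "\<forall>q\<in>W. X q = exp ((\<nu> q)\<^sup>2 + c)" and "\<nu> p = 0"
    using sqrt_log_coordinate_exp[OF sl local_coordinateD(2)[OF lc]] by blast
  obtain G M where "G analytic_on {0}" and G: "\<forall>\<^sub>F w in at 0. g (inv_into W \<nu> w) =
      G w + (\<Sum>k<M. fls_nth F (- (2 * int k + 1)) * w powi (- (2 * int k + 1)))"
    using has_laurent_expansion_odd_principal_part_decompose[OF g odd] by blast
  \<comment> \<open>D^(k+1) of the multiple \<Phi> (Suc k) of \<nu> is the term of order -(2k+1) of the principal part\<close>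
  define \<Phi> where "\<Phi> k = (case k of 0 \<Rightarrow> G
    | Suc i \<Rightarrow> (\<lambda>w. fls_nth F (- (2 * int i + 1)) / sq_deriv_coeff (Suc i) * w))" for k
  have "\<Phi> k analytic_on {\<nu> p}" for k
    using \<open>G analytic_on {0}\<close> \<open>\<nu> p = 0\<close>
    by (cases k) (auto simp: \<Phi>_def sq_deriv_coeff_nonzero intro!: analytic_intros)
  then have "holo_at A (\<lambda>q. \<Phi> k (\<nu> q)) p" for k
    by (rule holo_at_comp_local_coordinate[OF atl lc local_coordinateD(2)[OF lc]])
  moreover have "0 \<in> \<nu> ` W" using \<open>\<nu> p = 0\<close> local_coordinateD(2)[OF lc] by force
  have "\<forall>\<^sub>F w in at (\<nu> p).
      g (inv_into W \<nu> w) = (\<Sum>k<Suc M. (Dop A X ^^ k) (\<lambda>q. \<Phi> k (\<nu> q)) (inv_into W \<nu> w))"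
    unfolding \<open>\<nu> p = 0\<close>
    using G eventually_at_in_open[OF open_local_coordinate_image[OF atl lc] \<open>0 \<in> \<nu> ` W\<close>]
  proof eventually_elim
    case (elim w)
    have "(\<Sum>k<Suc M. (Dop A X ^^ k) (\<lambda>q. \<Phi> k (\<nu> q)) (inv_into W \<nu> w)) =
        \<Phi> 0 (\<nu> (inv_into W \<nu> w)) + (\<Sum>k<M. (Dop A X ^^ Suc k) (\<lambda>q. \<Phi> (Suc k) (\<nu> q)) (inv_into W \<nu> w))"
      by (simp only: sum.lessThan_Suc_shift funpow_0 id_apply)
    also have "\<Phi> 0 (\<nu> (inv_into W \<nu> w)) = G w" using elim by (simp add: \<Phi>_def f_inv_into_f)
    also have "(\<Sum>k<M. (Dop A X ^^ Suc k) (\<lambda>q. \<Phi> (Suc k) (\<nu> q)) (inv_into W \<nu> w)) =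
        (\<Sum>k<M. fls_nth F (- (2 * int k + 1)) * w powi (- (2 * int k + 1)))"
      using Dop_power_local_coordinate_odd_power[OF atl lc X] elim by (simp add: \<Phi>_def)
    finally show ?case using elim by simp
  qed
  then have "\<exists>W'. openin T W' \<and> p \<in> W' \<and>
      (\<forall>q\<in>W' - {p}. g q = (\<Sum>k<Suc M. (Dop A X ^^ k) (\<lambda>q. \<Phi> k (\<nu> q)) q))"
    by (rule eventually_at_local_coordinate_iff[OF atl lc, THEN iffD2])
  ultimately show ?thesis
    unfolding Xi_hat_at_def by (intro exI[of _ "Suc M"] exI[of _ "\<lambda>k q. \<Phi> k (\<nu> q)"]) blast
qed

lemma Hausdorff_finite_disjoint_neighbourhoods:
  assumes T: "Hausdorff_space T" and "finite P" "P \<subseteq> topspace T"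
  obtains U where "\<And>a. a \<in> P \<Longrightarrow> openin T (U a) \<and> a \<in> U a"
    "\<And>a b. a \<in> P \<Longrightarrow> b \<in> P \<Longrightarrow> a \<noteq> b \<Longrightarrow> disjnt (U a) (U b)"
proof -
  have "\<forall>a\<in>P. \<exists>Ua Va. openin T Ua \<and> openin T Va \<and> a \<in> Ua \<and> P - {a} \<subseteq> Va \<and> disjnt Ua Va"
  proof
    fix a assume "a \<in> P"
    have "compactin T {a}" "compactin T (P - {a})"
      using \<open>a \<in> P\<close> assms(2,3) by (auto intro!: finite_imp_compactin)
    then obtain Ua Va where "openin T Ua" "openin T Va" "{a} \<subseteq> Ua" "P - {a} \<subseteq> Va" "disjnt Ua Va"
      by (rule Hausdorff_space_compact_separation[OF T]) (simp add: disjnt_def)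
    then show "\<exists>Ua Va. openin T Ua \<and> openin T Va \<and> a \<in> Ua \<and> P - {a} \<subseteq> Va \<and> disjnt Ua Va" by blast
  qed
  then have "\<exists>Ua Va. \<forall>a\<in>P. openin T (Ua a) \<and> openin T (Va a) \<and> a \<in> Ua a \<and>
      P - {a} \<subseteq> Va a \<and> disjnt (Ua a) (Va a)"
    by (simp only: bchoice_iff)
  then obtain Ua Va where UV: "\<And>a. a \<in> P \<Longrightarrow> openin T (Ua a) \<and> openin T (Va a) \<and> a \<in> Ua a \<and>
      P - {a} \<subseteq> Va a \<and> disjnt (Ua a) (Va a)"
    by blast
  define U where "U a = Ua a \<inter> \<Inter> (Va ` (P - {a}))" for a
  show ?thesis
  proof (rule that[of U])
    fix a assume "a \<in> P"
    then show "openin T (U a) \<and> a \<in> U a"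
      unfolding U_def using UV \<open>finite P\<close> by (auto intro!: openin_Int_Inter)
  next
    fix a b assume "a \<in> P" "b \<in> P" "a \<noteq> b"
    then have "U a \<subseteq> Ua a" "U b \<subseteq> Va a" by (auto simp: U_def)
    then show "disjnt (U a) (U b)" using UV[OF \<open>a \<in> P\<close>] by (meson disjnt_subset1 disjnt_subset2)
  qed
qed

lemma Xi_hat_at_padded:
  assumes "Xi_hat_at T A X a g"
  shows "\<exists>K \<phi> W. (\<forall>k. (k < K \<longrightarrow> holo_at A (\<phi> k) a) \<and> (K \<le> k \<longrightarrow> \<phi> k = (\<lambda>_. 0))) \<and>
    openin T W \<and> a \<in> W \<and> (\<forall>K'\<ge>K. \<forall>q\<in>W - {a}. g q = (\<Sum>k<K'. (Dop A X ^^ k) (\<phi> k) q))"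
proof -
  obtain K \<phi> W where "\<forall>k<K. holo_at A (\<phi> k) a" "openin T W" "a \<in> W"
    and g: "\<forall>q\<in>W - {a}. g q = (\<Sum>k<K. (Dop A X ^^ k) (\<phi> k) q)"
    using assms unfolding Xi_hat_at_def by blast
  define \<psi> where "\<psi> k = (if k < K then \<phi> k else (\<lambda>_. 0))" for k
  have "(\<Sum>k<K'. (Dop A X ^^ k) (\<psi> k) q) = (\<Sum>k<K. (Dop A X ^^ k) (\<phi> k) q)" if "K \<le> K'" for K' q
  proof -
    have "(Dop A X ^^ k) (\<psi> k) q = (if k \<in> {..<K} then (Dop A X ^^ k) (\<phi> k) q else 0)" for k
      by (simp add: \<psi>_def Dop_power_zero)
    then have "(\<Sum>k<K'. (Dop A X ^^ k) (\<psi> k) q) = (\<Sum>k \<in> {..<K'} \<inter> {..<K}. (Dop A X ^^ k) (\<phi> k) q)"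
      by (simp only: sum.inter_restrict[OF finite_lessThan])
    also have "{..<K'} \<inter> {..<K} = {..<K}" using that by auto
    finally show ?thesis .
  qed
  then show ?thesis
    using \<open>\<forall>k<K. holo_at A (\<phi> k) a\<close> \<open>openin T W\<close> \<open>a \<in> W\<close> g
    by (intro exI[of _ K] exI[of _ \<psi>] exI[of _ W]) (auto simp: \<psi>_def)
qed

lemma sum_if_mem_disjoint:
  assumes "finite P" "a \<in> P" "q \<in> U a" "\<And>b. b \<in> P \<Longrightarrow> b \<noteq> a \<Longrightarrow> disjnt (U a) (U b)"
  shows "(\<Sum>b\<in>P. if q \<in> U b then h b else 0) = h a"
proof -
  have "(\<Sum>b\<in>P. if q \<in> U b then h b else 0) = (\<Sum>b\<in>P. if b = a then h b else 0)"
    using assms(3,4) by (intro sum.cong) (auto simp: disjnt_iff)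
  then show ?thesis using assms(1,2) by simp
qed

lemma Xi_hat_at_imp_in_Xi_hat:
  assumes atl: "holomorphic_atlas T A" and "Hausdorff_space T"
    and "\<forall>i\<in>{1..N}. p i \<in> topspace T \<and> Xi_hat_at T A X (p i) g"
  shows "in_Xi_hat T A X N p g"
proof -
  define P where "P = p ` {1..N}"
  have "finite P" "P \<subseteq> topspace T" using assms(3) by (auto simp: P_def)
  have "\<forall>a\<in>P. \<exists>K \<phi> W. (\<forall>k. (k < K \<longrightarrow> holo_at A (\<phi> k) a) \<and> (K \<le> k \<longrightarrow> \<phi> k = (\<lambda>_. 0))) \<and>
      openin T W \<and> a \<in> W \<and> (\<forall>K'\<ge>K. \<forall>q\<in>W - {a}. g q = (\<Sum>k<K'. (Dop A X ^^ k) (\<phi> k) q))"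
  proof
    fix a assume "a \<in> P"
    then have "Xi_hat_at T A X a g" using assms(3) by (auto simp: P_def)
    then show "\<exists>K \<phi> W. (\<forall>k. (k < K \<longrightarrow> holo_at A (\<phi> k) a) \<and> (K \<le> k \<longrightarrow> \<phi> k = (\<lambda>_. 0))) \<and>
        openin T W \<and> a \<in> W \<and> (\<forall>K'\<ge>K. \<forall>q\<in>W - {a}. g q = (\<Sum>k<K'. (Dop A X ^^ k) (\<phi> k) q))"
      by (rule Xi_hat_at_padded)
  qed
  then have "\<exists>K \<phi> W. \<forall>a\<in>P.
      (\<forall>k. (k < K a \<longrightarrow> holo_at A (\<phi> a k) a) \<and> (K a \<le> k \<longrightarrow> \<phi> a k = (\<lambda>_. 0))) \<and>
      openin T (W a) \<and> a \<in> W a \<and> (\<forall>K'\<ge>K a. \<forall>q\<in>W a - {a}. g q = (\<Sum>k<K'. (Dop A X ^^ k) (\<phi> a k) q))"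
    by (simp only: bchoice_iff)
  then obtain K \<phi> W where "\<forall>a\<in>P.
      (\<forall>k. (k < K a \<longrightarrow> holo_at A (\<phi> a k) a) \<and> (K a \<le> k \<longrightarrow> \<phi> a k = (\<lambda>_. 0))) \<and>
      openin T (W a) \<and> a \<in> W a \<and> (\<forall>K'\<ge>K a. \<forall>q\<in>W a - {a}. g q = (\<Sum>k<K'. (Dop A X ^^ k) (\<phi> a k) q))"
    by (elim exE) (rule that)
  note rep = bspec[OF this]
  obtain U where U: "\<And>a. a \<in> P \<Longrightarrow> openin T (U a) \<and> a \<in> U a"
    and disj: "\<And>a b. a \<in> P \<Longrightarrow> b \<in> P \<Longrightarrow> a \<noteq> b \<Longrightarrow> disjnt (U a) (U b)"
    using Hausdorff_finite_disjoint_neighbourhoods[OF assms(2) \<open>finite P\<close> \<open>P \<subseteq> topspace T\<close>] by blast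
  define f where "f k q = (\<Sum>a\<in>P. if q \<in> U a then \<phi> a k q else 0)" for k q
  have f_on: "\<forall>q\<in>U a. \<phi> a k q = f k q" if "a \<in> P" for a k
    unfolding f_def using sum_if_mem_disjoint[OF \<open>finite P\<close> that] disj that by metis
  define Kmax where "Kmax = (\<Sum>a\<in>P. K a)"
  show ?thesis
    unfolding in_Xi_hat_def
  proof (intro exI[of _ Kmax] exI[of _ "\<lambda>_. 1 :: complex"] exI[of _ "\<lambda>k. k"] exI[of _ f] conjI allI impI ballI)
    fix k i assume "i \<in> {1..N}"
    then have "p i \<in> P" by (simp add: P_def)
    then have "holo_at A (\<phi> (p i) k) (p i)"
      using rep holo_at_const[OF atl] \<open>P \<subseteq> topspace T\<close> by (cases "k < K (p i)") auto
    then show "holo_at A (f k) (p i)"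
      using holo_at_cong[OF atl] U[OF \<open>p i \<in> P\<close>] f_on[OF \<open>p i \<in> P\<close>] by blast
  next
    fix i assume "i \<in> {1..N}"
    then have "p i \<in> P" by (simp add: P_def)
    have "K (p i) \<le> Kmax" using member_le_sum[of "p i" P K] \<open>p i \<in> P\<close> \<open>finite P\<close> by (simp add: Kmax_def)
    have "g q = (\<Sum>k<Kmax. 1 * (Dop A X ^^ k) (f k) q)" if "q \<in> W (p i) \<inter> U (p i) - {p i}" for q
      using rep[OF \<open>p i \<in> P\<close>] \<open>K (p i) \<le> Kmax\<close> that
        Dop_power_cong[OF atl _ f_on[OF \<open>p i \<in> P\<close>]] U[OF \<open>p i \<in> P\<close>] by auto
    then show "\<exists>W'. openin T W' \<and> p i \<in> W' \<and> (\<forall>q\<in>W' - {p i}. g q = (\<Sum>k<Kmax. 1 * (Dop A X ^^ k) (f k) q))"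
      using rep[OF \<open>p i \<in> P\<close>] U[OF \<open>p i \<in> P\<close>] by (intro exI[of _ "W (p i) \<inter> U (p i)"]) auto
  qed
qed

section \<open>Existence of square-root coordinates\<close>

lemma holomorphic_double_zero_factor:
  fixes f :: "complex \<Rightarrow> complex"
  assumes hol: "f holomorphic_on ball z0 r" and "r > 0" and "deriv f z0 = 0"
  obtains u where "u holomorphic_on ball z0 r" "\<And>z. f z = f z0 + (z - z0)\<^sup>2 * u z"
    "deriv (deriv f) z0 = 2 * u z0"
proof -
  define S where "S = ball z0 r"
  have "open S" "z0 \<in> S" "z0 \<in> interior S" using \<open>r > 0\<close> by (auto simp: S_def)
  define h where "h z = (if z = z0 then deriv f z0 else (f z - f z0) / (z - z0))" for z
  have "h holomorphic_on S" unfolding h_def using pole_lemma[OF hol[folded S_def] \<open>z0 \<in> interior S\<close>] .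
  define u where "u z = (if z = z0 then deriv h z0 else (h z - h z0) / (z - z0))" for z
  have u: "u holomorphic_on S" unfolding u_def using pole_lemma[OF \<open>h holomorphic_on S\<close> \<open>z0 \<in> interior S\<close>] .
  have fh: "f z = f z0 + (z - z0) * h z" for z by (cases "z = z0") (auto simp: h_def)
  have hu: "h z = (z - z0) * u z" for z
    using \<open>deriv f z0 = 0\<close> by (cases "z = z0") (auto simp: h_def u_def)
  have fu: "f z = f z0 + (z - z0)\<^sup>2 * u z" for z
    using fh[of z] hu[of z] by (simp add: power2_eq_square)
  have du: "(u has_field_derivative deriv u z) (at z)" if "z \<in> S" for z
    using holomorphic_derivI[OF u \<open>open S\<close> that] .
  have ddu: "(deriv u has_field_derivative deriv (deriv u) z) (at z)" if "z \<in> S" for z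
    using holomorphic_derivI[OF holomorphic_deriv[OF u \<open>open S\<close>] \<open>open S\<close> that] .
  define f' where "f' z = 2 * (z - z0) * u z + (z - z0)\<^sup>2 * deriv u z" for z
  have "deriv f z = f' z" if "z \<in> S" for z
  proof (rule DERIV_imp_deriv)
    have "((\<lambda>z. f z0 + (z - z0)\<^sup>2 * u z) has_field_derivative f' z) (at z)"
      unfolding f'_def using du[OF that] by (auto intro!: derivative_eq_intros)
    then show "(f has_field_derivative f' z) (at z)" by (simp add: fu[symmetric])
  qed
  moreover have "(f' has_field_derivative 2 * u z0) (at z0)"
    unfolding f'_def using du[OF \<open>z0 \<in> S\<close>] ddu[OF \<open>z0 \<in> S\<close>] by (auto intro!: derivative_eq_intros)
  ultimately have "(deriv f has_field_derivative 2 * u z0) (at z0)"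
    using has_field_derivative_transform_within_open[OF _ \<open>open S\<close> \<open>z0 \<in> S\<close>] by metis
  then have "deriv (deriv f) z0 = 2 * u z0" by (rule DERIV_imp_deriv)
  then show ?thesis using that u fu unfolding S_def by blast
qed

lemma ball_1_1_not_nonpos_Reals: "w \<in> ball (1::complex) 1 \<Longrightarrow> w \<notin> \<real>\<^sub>\<le>\<^sub>0"
proof -
  assume "w \<in> ball (1::complex) 1"
  then have "\<bar>Re (1 - w)\<bar> < 1" using abs_Re_le_cmod[of "1 - w"] by (simp add: dist_norm)
  then show ?thesis by (auto simp: complex_nonpos_Reals_iff)
qed

lemma holomorphic_sqrt_coordinate:
  fixes f :: "complex \<Rightarrow> complex"
  assumes "f holomorphic_on ball z0 r" "r > 0" "deriv f z0 = 0" "deriv (deriv f) z0 \<noteq> 0"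
  obtains B n where "open B" "z0 \<in> B" "B \<subseteq> ball z0 r" "n holomorphic_on B" "inj_on n B"
    "\<And>z. z \<in> B \<Longrightarrow> (n z)\<^sup>2 = f z - f z0"
proof -
  obtain u where u: "u holomorphic_on ball z0 r" and fu: "\<And>z. f z = f z0 + (z - z0)\<^sup>2 * u z"
    and "deriv (deriv f) z0 = 2 * u z0"
    using holomorphic_double_zero_factor[OF assms(1-3)] by blast
  then have "u z0 \<noteq> 0" using assms(4) by simp
  have "open (ball z0 r \<inter> (\<lambda>z. u z / u z0) -` ball 1 1)"
    using u by (intro continuous_open_preimage holomorphic_on_imp_continuous_on holomorphic_intros) auto
  moreover have "z0 \<in> ball z0 r \<inter> (\<lambda>z. u z / u z0) -` ball 1 1" using \<open>r > 0\<close> \<open>u z0 \<noteq> 0\<close> by simp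
  ultimately obtain e where "e > 0" and e: "ball z0 e \<subseteq> ball z0 r \<inter> (\<lambda>z. u z / u z0) -` ball 1 1"
    by (meson openE)
  \<comment> \<open>u/u(z0) stays in ball 1 1, away from the branch cut of csqrt\<close>
  define s where "s z = csqrt (u z / u z0) * csqrt (u z0)" for z
  define n where "n z = (z - z0) * s z" for z
  have "s holomorphic_on ball z0 e"
    unfolding s_def using e ball_1_1_not_nonpos_Reals
    by (intro holomorphic_intros holomorphic_on_subset[OF u]) auto
  then have n: "n holomorphic_on ball z0 e" unfolding n_def by (intro holomorphic_intros)
  have "(s has_field_derivative deriv s z0) (at z0)"
    using holomorphic_derivI[OF \<open>s holomorphic_on ball z0 e\<close> open_ball] \<open>e > 0\<close> by simp
  then have "(n has_field_derivative s z0) (at z0)"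
    unfolding n_def by (auto intro!: derivative_eq_intros)
  then have "deriv n z0 \<noteq> 0" using \<open>u z0 \<noteq> 0\<close> by (simp add: DERIV_imp_deriv s_def)
  then obtain d where "d > 0" "ball z0 d \<subseteq> ball z0 e" "inj_on n (ball z0 d)"
    using has_complex_derivative_locally_injective[OF n _ _ \<open>deriv n z0 \<noteq> 0\<close>] \<open>e > 0\<close> by auto
  moreover have "(n z)\<^sup>2 = f z - f z0" for z
  proof -
    have "(s z)\<^sup>2 = u z" using \<open>u z0 \<noteq> 0\<close> by (simp add: s_def power_mult_distrib)
    then show ?thesis using fu[of z] by (simp add: n_def power_mult_distrib)
  qed
  ultimately show ?thesis
    using that[of "ball z0 d" n] e holomorphic_on_subset[OF n] by auto
qed

lemma holomorphic_log_ball: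
  fixes h :: "complex \<Rightarrow> complex"
  assumes "h analytic_on {z0}" "h z0 \<noteq> 0"
  obtains r L where "r > 0" "h holomorphic_on ball z0 r" "L holomorphic_on ball z0 r"
    "\<And>z. z \<in> ball z0 r \<Longrightarrow> exp (L z) = h z \<and> h z \<noteq> 0 \<and> deriv L z = deriv h z / h z"
proof -
  obtain r0 where "r0 > 0" and h0: "h holomorphic_on ball z0 r0"
    using assms(1) unfolding analytic_on_def by blast
  have "open (ball z0 r0 \<inter> (\<lambda>z. h z / h z0) -` ball 1 1)"
    using h0 by (intro continuous_open_preimage holomorphic_on_imp_continuous_on holomorphic_intros) auto
  moreover have "z0 \<in> ball z0 r0 \<inter> (\<lambda>z. h z / h z0) -` ball 1 1" using \<open>r0 > 0\<close> assms(2) by simp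
  ultimately obtain r where "r > 0" and r: "ball z0 r \<subseteq> ball z0 r0 \<inter> (\<lambda>z. h z / h z0) -` ball 1 1"
    by (meson openE)
  have h: "h holomorphic_on ball z0 r" using h0 r by (blast intro: holomorphic_on_subset)
  have nonpos: "h z / h z0 \<notin> \<real>\<^sub>\<le>\<^sub>0" "h z \<noteq> 0" if "z \<in> ball z0 r" for z
    using r that ball_1_1_not_nonpos_Reals by (auto simp: complex_nonpos_Reals_iff)
  \<comment> \<open>h/h(z0) stays in ball 1 1, away from the branch cut of Ln\<close>
  define L where "L z = Ln (h z / h z0) + Ln (h z0)" for z
  have L: "L holomorphic_on ball z0 r" unfolding L_def using nonpos by (intro holomorphic_intros h) auto
  have expL: "exp (L z) = h z" if "z \<in> ball z0 r" for z
    using nonpos[OF that] assms(2) by (simp add: L_def exp_add)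
  have "deriv L z = deriv h z / h z" if "z \<in> ball z0 r" for z
  proof -
    have "((\<lambda>z. exp (L z)) has_field_derivative exp (L z) * deriv L z) (at z)"
      using holomorphic_derivI[OF L open_ball that] by (auto intro!: derivative_eq_intros)
    then have "(h has_field_derivative h z * deriv L z) (at z)"
      using expL that by (auto intro: has_field_derivative_transform_within_open[OF _ open_ball])
    then show ?thesis
      using DERIV_unique[OF _ holomorphic_derivI[OF h open_ball that]] nonpos(2)[OF that]
      by (simp add: field_simps)
  qed
  then show ?thesis using that[OF \<open>r > 0\<close> h L] expL nonpos(2) by blast
qed

lemma holomorphic_log_sqrt_coordinate:
  fixes h :: "complex \<Rightarrow> complex"
  assumes "h analytic_on {z0}" "h z0 \<noteq> 0" "deriv h z0 = 0" "deriv (deriv h) z0 \<noteq> 0"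
  obtains B n L where "open B" "z0 \<in> B" "n holomorphic_on B" "inj_on n B" "L holomorphic_on B"
    "\<And>z. z \<in> B \<Longrightarrow> exp (L z) = h z \<and> (n z)\<^sup>2 = L z - L z0"
proof -
  obtain r L where "r > 0" and h: "h holomorphic_on ball z0 r" and L: "L holomorphic_on ball z0 r"
    and hL: "\<And>z. z \<in> ball z0 r \<Longrightarrow> exp (L z) = h z \<and> h z \<noteq> 0 \<and> deriv L z = deriv h z / h z"
    using holomorphic_log_ball[OF assms(1,2)] by blast
  have "z0 \<in> ball z0 r" using \<open>r > 0\<close> by simp
  have "((\<lambda>z. deriv h z / h z) has_field_derivative deriv (deriv h) z0 / h z0) (at z0)"
    using DERIV_divide[OF holomorphic_derivI[OF holomorphic_deriv[OF h open_ball] open_ball \<open>z0 \<in> ball z0 r\<close>]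
      holomorphic_derivI[OF h open_ball \<open>z0 \<in> ball z0 r\<close>]] assms(2,3) by (simp add: power2_eq_square)
  then have "(deriv L has_field_derivative deriv (deriv h) z0 / h z0) (at z0)"
    using hL by (auto intro: has_field_derivative_transform_within_open[OF _ open_ball \<open>z0 \<in> ball z0 r\<close>])
  then have "deriv (deriv L) z0 \<noteq> 0" using assms(2,4) by (simp add: DERIV_imp_deriv)
  moreover have "deriv L z0 = 0" using hL[OF \<open>z0 \<in> ball z0 r\<close>] assms(3) by simp
  ultimately obtain B n where "open B" "z0 \<in> B" "B \<subseteq> ball z0 r" "n holomorphic_on B" "inj_on n B"
    "\<And>z. z \<in> B \<Longrightarrow> (n z)\<^sup>2 = L z - L z0"
    using holomorphic_sqrt_coordinate[OF L \<open>r > 0\<close>] by blast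
  then show ?thesis using that[of B n L] hL holomorphic_on_subset[OF L] by blast
qed

lemma eventually_chart_pullback:
  assumes "complex_chart T (U, \<phi>)" "q \<in> U"
  shows "\<forall>\<^sub>F z in nhds (\<phi> q). k (\<phi> (inv_into U \<phi> z)) = k z"
  using eventually_chart_inverse_in[OF assms(1) complex_chartD(1)[OF assms(1)] assms(2,2)]
  by eventually_elim simp

lemma holo_at_chart_pullback:
  assumes atl: "holomorphic_atlas T A" and UA: "(U, \<phi>) \<in> A" and "q \<in> U"
    and "k analytic_on {\<phi> q}"
  shows "holo_at A (k \<circ> \<phi>) q"
proof -
  have "\<forall>\<^sub>F z in nhds (\<phi> q). k z = (k \<circ> \<phi> \<circ> inv_into U \<phi>) z"
    using eventually_chart_pullback[OF holomorphic_atlas_chart[OF atl UA] \<open>q \<in> U\<close>, of k]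
    by eventually_elim simp
  then have "(k \<circ> \<phi> \<circ> inv_into U \<phi>) analytic_on {\<phi> q}"
    using assms(4) analytic_at_cong[OF _ refl] by blast
  then show ?thesis unfolding holo_at_def using UA \<open>q \<in> U\<close> by auto
qed

lemma local_coordinate_chart_pullback:
  assumes atl: "holomorphic_atlas T A" and UA: "(U, \<phi>) \<in> A"
    and "open B" "n holomorphic_on B" "inj_on n B" "p \<in> U" "\<phi> p \<in> B"
  shows "local_coordinate T A p {q \<in> U. \<phi> q \<in> B} (n \<circ> \<phi>)"
  unfolding local_coordinate_def
proof (intro conjI ballI)
  have cU: "complex_chart T (U, \<phi>)" using holomorphic_atlas_chart[OF atl UA] .
  show "openin T {q \<in> U. \<phi> q \<in> B}" by (rule complex_chart_open_preimage[OF cU \<open>open B\<close>])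
  show "p \<in> {q \<in> U. \<phi> q \<in> B}" using assms(6,7) by simp
  show "inj_on (n \<circ> \<phi>) {q \<in> U. \<phi> q \<in> B}"
    using complex_chartD(3)[OF cU] assms(5) by (auto simp: inj_on_def)
next
  fix q assume q: "q \<in> {q \<in> U. \<phi> q \<in> B}"
  have ev: "\<forall>\<^sub>F z in nhds (\<phi> q). n z = (n \<circ> \<phi> \<circ> inv_into U \<phi>) z"
    using eventually_chart_pullback[OF holomorphic_atlas_chart[OF atl UA], of q n] q
    by (auto elim: eventually_mono)
  have "n analytic_on {\<phi> q}" using holomorphic_on_imp_analytic_at[OF assms(4,3)] q by simp
  moreover have "deriv n (\<phi> q) \<noteq> 0" using holomorphic_injective_imp_regular[OF assms(4,3,5)] q by simp
  ultimately show "\<exists>(U', \<phi>')\<in>A. q \<in> U' \<and> (n \<circ> \<phi> \<circ> inv_into U' \<phi>') analytic_on {\<phi>' q} \<and>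
      deriv (n \<circ> \<phi> \<circ> inv_into U' \<phi>') (\<phi>' q) \<noteq> 0"
    using UA q analytic_at_cong[OF ev refl] deriv_cong_ev[OF ev refl]
    by (intro bexI[of _ "(U, \<phi>)"]) (auto simp: o_def)
qed

lemma exists_sqrt_log_coordinate:
  assumes atl: "holomorphic_atlas T A"
    and "holo_at A X p" "X p \<noteq> 0" "dX_simple_zero A X p"
  shows "\<exists>W \<nu>. local_coordinate T A p W \<nu> \<and> sqrt_log_coordinate A X p W \<nu>"
proof -
  obtain U \<phi> where UA: "(U, \<phi>) \<in> A" and "p \<in> U" and d: "deriv (X \<circ> inv_into U \<phi>) (\<phi> p) = 0"
    "deriv (deriv (X \<circ> inv_into U \<phi>)) (\<phi> p) \<noteq> 0"
    using assms(4) unfolding dX_simple_zero_def by auto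
  have inv: "inv_into U \<phi> (\<phi> q) = q" if "q \<in> U" for q
    using inv_into_f_f[OF complex_chartD(3)[OF holomorphic_atlas_chart[OF atl UA]] that] .
  have "(X \<circ> inv_into U \<phi>) (\<phi> p) = X p" using inv[OF \<open>p \<in> U\<close>] by simp
  then obtain B n L where "open B" "\<phi> p \<in> B" and n: "n holomorphic_on B" "inj_on n B"
    and L: "L holomorphic_on B"
    and nL: "\<And>z. z \<in> B \<Longrightarrow> exp (L z) = (X \<circ> inv_into U \<phi>) z \<and> (n z)\<^sup>2 = L z - L (\<phi> p)"
    using holomorphic_log_sqrt_coordinate[OF holo_at_imp_analytic_in_chart[OF atl assms(2) UA \<open>p \<in> U\<close>] _ d]
      assms(3) by metis
  have "sqrt_log_coordinate A X p {q \<in> U. \<phi> q \<in> B} (n \<circ> \<phi>)"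
    unfolding sqrt_log_coordinate_def
  proof (intro exI[of _ "L \<circ> \<phi>"] conjI ballI)
    fix q assume q: "q \<in> {q \<in> U. \<phi> q \<in> B}"
    show "holo_at A (L \<circ> \<phi>) q"
      using holo_at_chart_pullback[OF atl UA] holomorphic_on_imp_analytic_at[OF L \<open>open B\<close>] q by simp
    show "exp ((L \<circ> \<phi>) q) = X q" using nL inv q by simp
    show "((n \<circ> \<phi>) q)\<^sup>2 = (L \<circ> \<phi>) q - (L \<circ> \<phi>) p" using nL q by simp
  qed
  then show ?thesis
    using local_coordinate_chart_pullback[OF atl UA \<open>open B\<close> n \<open>p \<in> U\<close> \<open>\<phi> p \<in> B\<close>] by blast
qed

lemma in_Xi_hat_imp_odd_principal_parts:
  assumes atl: "holomorphic_atlas T A" and "in_Xi_hat T A X N p g"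
  shows "\<forall>i\<in>{1..N}. \<forall>W \<nu>. local_coordinate T A (p i) W \<nu> \<and> sqrt_log_coordinate A X (p i) W \<nu> \<longrightarrow>
    (\<exists>F. (\<lambda>w. g (inv_into W \<nu> w)) has_laurent_expansion F \<and> odd_principal_part F)"
proof (intro ballI allI impI, elim conjE)
  fix i W \<nu>
  assume "i \<in> {1..N}" and lc: "local_coordinate T A (p i) W \<nu>" and sl: "sqrt_log_coordinate A X (p i) W \<nu>"
  obtain m :: nat and c j f where hf: "\<forall>k<m. \<forall>i\<in>{1..N}. holo_at A (f k) (p i)"
    and g: "\<forall>i\<in>{1..N}. \<exists>W. openin T W \<and> p i \<in> W \<and>
      (\<forall>q\<in>W - {p i}. g q = (\<Sum>k<m. c k * (Dop A X ^^ j k) (f k) q))"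
    using assms(2) unfolding in_Xi_hat_def by (elim exE conjE) (rule that)
  obtain Wg where "openin T Wg" "p i \<in> Wg" "\<forall>q\<in>Wg - {p i}. g q = (\<Sum>k<m. c k * (Dop A X ^^ j k) (f k) q)"
    using g \<open>i \<in> {1..N}\<close> by blast
  then show "\<exists>F. (\<lambda>w. g (inv_into W \<nu> w)) has_laurent_expansion F \<and> odd_principal_part F"
    using Dop_combination_odd_principal_part[OF atl lc sl] hf \<open>i \<in> {1..N}\<close> by blast
qed

lemma odd_principal_parts_imp_in_Xi_hat:
  assumes "riemann_surface T A" "\<forall>q\<in>topspace T. holo_at A X q"
    and "\<forall>i\<in>{1..N}. p i \<in> topspace T \<and> X (p i) \<noteq> 0 \<and> dX_simple_zero A X (p i)"
    and odd: "\<forall>i\<in>{1..N}. \<forall>W \<nu>. local_coordinate T A (p i) W \<nu> \<and> sqrt_log_coordinate A X (p i) W \<nu> \<longrightarrow>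
      (\<exists>F. (\<lambda>w. g (inv_into W \<nu> w)) has_laurent_expansion F \<and> odd_principal_part F)"
  shows "in_Xi_hat T A X N p g"
proof (rule Xi_hat_at_imp_in_Xi_hat)
  show atl: "holomorphic_atlas T A" and "Hausdorff_space T"
    using assms(1) by (simp_all add: riemann_surface_def)
  show "\<forall>i\<in>{1..N}. p i \<in> topspace T \<and> Xi_hat_at T A X (p i) g"
  proof
    fix i assume i: "i \<in> {1..N}"
    then have "holo_at A X (p i)" "X (p i) \<noteq> 0" "dX_simple_zero A X (p i)" using assms(2,3) by auto
    then obtain W \<nu> where "local_coordinate T A (p i) W \<nu>" "sqrt_log_coordinate A X (p i) W \<nu>"
      using exists_sqrt_log_coordinate[OF atl] by blast
    then show "p i \<in> topspace T \<and> Xi_hat_at T A X (p i) g"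
      using odd_principal_part_imp_Xi_hat_at[OF atl] odd i assms(3) by blast
  qed
qed

theorem proposition2p7:
  fixes T :: "'a topology"
    and A :: "('a set \<times> ('a \<Rightarrow> complex)) set"
    and X g :: "'a \<Rightarrow> complex"
    and N :: nat
    and p :: "nat \<Rightarrow> 'a"
  assumes "riemann_surface T A"
    and "\<forall>q\<in>topspace T. holo_at A X q"
    and "\<forall>i\<in>{1..N}. p i \<in> topspace T \<and> X (p i) \<noteq> 0 \<and> dX_simple_zero A X (p i)"
    and "\<forall>i\<in>{1..N}. mero_at A g (p i)"
  shows "in_Xi_hat T A X N p g \<longleftrightarrow>
    (\<forall>i\<in>{1..N}. \<forall>W \<nu>. local_coordinate T A (p i) W \<nu> \<and> sqrt_log_coordinate A X (p i) W \<nu> \<longrightarrow>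
        (\<exists>F. (\<lambda>w. g (inv_into W \<nu> w)) has_laurent_expansion F \<and> odd_principal_part F))"
proof -
  have "holomorphic_atlas T A" using assms(1) by (simp add: riemann_surface_def)
  then show ?thesis
    using in_Xi_hat_imp_odd_principal_parts odd_principal_parts_imp_in_Xi_hat[OF assms(1-3)] by blast
qed

end
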